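(* If $mG$ is a finite canonical misinformation game, then $SME(mG)\neq\emptyset$.
   Context: A normal-form game is $G=\langle N,S,P\rangle$ with finite players $N$, finite pure strategy sets $S_i$, positions $S=\times_i S_i$, payoffs $P_i:S\to\mathbb{R}$. A misinformation game $mG=\langle G^0,G^1,\dots,G^{|N|}\rangle$ consists of the actual game $G^0$ and subjective games $G^i$; it is canonical if all $G^i=\langle N,S,P^i\rangle$ differ from $G^0$ only in payoffs and in every $G^i$ all players have equally many pure strategies. $NME(mG)$ is the set of profiles $\sigma=(\sigma_1,\dots,\sigma_{|N|})$ such that each $\sigma_i$ is player $i$'s component of some Nash equilibrium of $G^i$. $\chi(\sigma)=\mathrm{supp}(\sigma_1)\times\dots\times\mathrm{supp}(\sigma_{|N|})$. For $\vec v\in S$, $mG_{\vec v}$ is obtained by replacing, in every $P^i$ ($i\ge1$), the payoff vector at position $\vec v$ by $P^0(\vec v)$. For a set $M$ of misinformation games, $\mathcal{AD}(M)=\{mG_{\vec u}: mG\in M,\sigma\in NME(mG),\vec u\in\chi(\sigma)\}$, $\mathcal{AD}^{(0)}(M)=M$, $\mathcal{AD}^{(t+1)}(M)=\mathcal{AD}^{(t)}(\mathcal{AD}(M))$; the length $\mathfrak{L}$ is the least $t\ge0$ with $\mathcal{AD}^{(t+1)}(M)=\mathcal{AD}^{(t)}(M)$ and $\mathcal{AD}^\infty(M)=\mathcal{AD}^{(\mathfrak{L})}(M)$. A profile $\sigma$ is a stable misinformed equilibrium (sme) of $mG$ if there is $\widehat{mG}\in\mathcal{AD}^\infty(\{mG\})$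 with $\sigma\in NME(\widehat{mG})$ and $\widehat{mG}_{\vec v}=\widehat{mG}$ for all $\vec v\in\chi(\sigma)$; $SME(mG)$ is the set of smes. *)

theory Defs
  imports Complex_Main "HOL-Library.FuncSet"
begin

text \<open>
  Canonical misinformation games over a fixed finite set of players N and fixed pure
  strategy sets S i (shared by the actual game and all subjective games, which differ
  only in payoffs).
  A canonical misinformation game is a pair (P0, P) where P0 is the payoff function
  of the actual game G^0 and P i is the payoff function of the subjective game G^i
  of player i (for i in N).
\<close>

type_synonym ('i, 's) payoff = "('i \<Rightarrow> 's) \<Rightarrow> 'i \<Rightarrow> real"
type_synonym ('i, 's) mgame = "('i, 's) payoff \<times> ('i \<Rightarrow> ('i, 's) payoff)"
type_synonym ('i, 's) profile = "'i \<Rightarrow> 's \<Rightarrow> real"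

definition positions :: "'i set \<Rightarrow> ('i \<Rightarrow> 's set) \<Rightarrow> ('i \<Rightarrow> 's) set" where
  "positions N S = PiE N S"

definition mixed_strats :: "('i \<Rightarrow> 's set) \<Rightarrow> 'i \<Rightarrow> ('s \<Rightarrow> real) set" where
  "mixed_strats S i = {f. (\<forall>s. 0 \<le> f s) \<and> (\<forall>s. s \<notin> S i \<longrightarrow> f s = 0) \<and> sum f (S i) = 1}"

definition mixed_profiles :: "'i set \<Rightarrow> ('i \<Rightarrow> 's set) \<Rightarrow> ('i, 's) profile set" where
  "mixed_profiles N S = PiE N (mixed_strats S)"

definition exp_payoff :: "'i set \<Rightarrow> ('i \<Rightarrow> 's set) \<Rightarrow> ('i, 's) payoff \<Rightarrow> ('i, 's) profile \<Rightarrow> 'i \<Rightarrow> real" where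
  "exp_payoff N S Q \<sigma> i = (\<Sum>v\<in>positions N S. (\<Prod>j\<in>N. \<sigma> j (v j)) * Q v i)"

definition nash :: "'i set \<Rightarrow> ('i \<Rightarrow> 's set) \<Rightarrow> ('i, 's) payoff \<Rightarrow> ('i, 's) profile \<Rightarrow> bool" where
  "nash N S Q \<sigma> \<longleftrightarrow> \<sigma> \<in> mixed_profiles N S \<and>
     (\<forall>i\<in>N. \<forall>\<tau>\<in>mixed_strats S i. exp_payoff N S Q (\<sigma>(i := \<tau>)) i \<le> exp_payoff N S Q \<sigma> i)"

definition NME :: "'i set \<Rightarrow> ('i \<Rightarrow> 's set) \<Rightarrow> ('i, 's) mgame \<Rightarrow> ('i, 's) profile set" where
  "NME N S mG = {\<sigma>. \<sigma> \<in> mixed_profiles N S \<and>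
      (\<forall>i\<in>N. \<exists>\<tau>. nash N S (snd mG i) \<tau> \<and> \<sigma> i = \<tau> i)}"

definition chi :: "'i set \<Rightarrow> ('i \<Rightarrow> 's set) \<Rightarrow> ('i, 's) profile \<Rightarrow> ('i \<Rightarrow> 's) set" where
  "chi N S \<sigma> = PiE N (\<lambda>i. {s \<in> S i. \<sigma> i s \<noteq> 0})"

definition adapt :: "'i set \<Rightarrow> ('i, 's) mgame \<Rightarrow> ('i \<Rightarrow> 's) \<Rightarrow> ('i, 's) mgame" where
  "adapt N mG v = (fst mG, \<lambda>j. if j \<in> N then (snd mG j)(v := fst mG v) else snd mG j)"

definition AD :: "'i set \<Rightarrow> ('i \<Rightarrow> 's set) \<Rightarrow> ('i, 's) mgame set \<Rightarrow> ('i, 's) mgame set" where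
  "AD N S M = {adapt N mG u | mG \<sigma> u. mG \<in> M \<and> \<sigma> \<in> NME N S mG \<and> u \<in> chi N S \<sigma>}"

definition AD_iter :: "nat \<Rightarrow> 'i set \<Rightarrow> ('i \<Rightarrow> 's set) \<Rightarrow> ('i, 's) mgame set \<Rightarrow> ('i, 's) mgame set" where
  "AD_iter t N S M = (AD N S ^^ t) M"

definition AD_length :: "'i set \<Rightarrow> ('i \<Rightarrow> 's set) \<Rightarrow> ('i, 's) mgame set \<Rightarrow> nat" where
  "AD_length N S M = (LEAST t. AD_iter (Suc t) N S M = AD_iter t N S M)"

definition AD_inf :: "'i set \<Rightarrow> ('i \<Rightarrow> 's set) \<Rightarrow> ('i, 's) mgame set \<Rightarrow> ('i, 's) mgame set" where
  "AD_inf N S M = AD_iter (AD_length N S M) N S M"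

definition SME :: "'i set \<Rightarrow> ('i \<Rightarrow> 's set) \<Rightarrow> ('i, 's) mgame \<Rightarrow> ('i, 's) profile set" where
  "SME N S mG = {\<sigma>. \<exists>mG' \<in> AD_inf N S {mG}. \<sigma> \<in> NME N S mG' \<and>
      (\<forall>v \<in> chi N S \<sigma>. adapt N mG' v = mG')}"

end

theory Submission
  imports Defs "HOL-Analysis.Analysis"
begin

text \<open>
  Every finite game has a Nash equilibrium: Nash's map, which moves each player's weight towards
  the pure strategies with positive regret, is a continuous self-map of the product of simplices,
  and its fixed points are exactly the equilibria. Brouwer's theorem applies because the product
  of simplices is a retract of a cube. Hence every subjective game has equilibria, so natural
  misinformed equilibria exist and every adaptation step has successors.

  An adaptation either leaves the misinformation game unchanged or removes one position from the
  finite set where some subjective payoff disagrees with the actual one. So the iterates of AD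
  stabilise after at most (number of disagreements + 1) rounds, at a set closed under adaptation.
  A game of minimal disagreement in that set is left unchanged by all its adaptations, and each of
  its natural misinformed equilibria is therefore stable.
\<close>

section \<open>Brouwer's fixed point theorem for cubes of variable dimension\<close>

text \<open>The library proves Brouwer's theorem for \<^class>\<open>euclidean_space\<close> types, whose dimension is
  fixed by the type. The dimension needed here depends on \<open>N\<close> and \<open>S\<close>, so cubes live in
  \<open>nat \<Rightarrow> real\<close> and the fixed point is obtained directly from Kuhn's lemma.\<close>

definition cube :: "nat \<Rightarrow> (nat \<Rightarrow> real) set" where
  "cube n = PiE UNIV (\<lambda>j. if j < n then {0..1} else {0})"

lemma mem_cube_iff: "x \<in> cube n \<longleftrightarrow> (\<forall>j<n. 0 \<le> x j \<and> x j \<le> 1) \<and> (\<forall>j\<ge>n. x j = 0)"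
proof -
  have "x j \<in> (if j < n then {0..1} else {0}) \<longleftrightarrow> (j < n \<longrightarrow> 0 \<le> x j \<and> x j \<le> 1) \<and> (j \<ge> n \<longrightarrow> x j = 0)" for j
    by (cases "j < n") auto
  then show ?thesis
    by (auto simp: cube_def PiE_UNIV_domain Pi_iff)
qed

lemma compact_cube: "compact (cube n)"
proof -
  have "compactin (product_topology (\<lambda>_. euclidean) UNIV) (cube n)"
    unfolding cube_def by (subst compactin_PiE) auto
  then show ?thesis
    by (simp add: euclidean_product_topology)
qed

lemma tendsto_coordinatewise_iff:
  "((g :: 'a \<Rightarrow> 'b \<Rightarrow> real) \<longlongrightarrow> l) F \<longleftrightarrow> (\<forall>j. ((\<lambda>k. g k j) \<longlongrightarrow> l j) F)"
  using limitin_componentwise[of "\<lambda>_. euclidean" UNIV g l F]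
  by (simp add: euclidean_product_topology)

lemma tendsto_in_cube_if_close:
  assumes z: "z \<longlonglongrightarrow> l" and e: "e \<longlonglongrightarrow> 0" and w: "\<And>k. w k \<in> cube n" and l: "l \<in> cube n"
    and close: "\<And>k j. j < n \<Longrightarrow> \<bar>w k j - z k j\<bar> \<le> e k"
  shows "w \<longlonglongrightarrow> l"
  unfolding tendsto_coordinatewise_iff
proof
  fix j
  show "(\<lambda>k. w k j) \<longlonglongrightarrow> l j"
  proof (cases "j < n")
    case True
    have "(\<lambda>k. w k j - z k j) \<longlonglongrightarrow> 0"
      using close[OF True] by (intro Lim_null_comparison[OF _ e]) auto
    moreover have "(\<lambda>k. z k j) \<longlonglongrightarrow> l j"
      using z unfolding tendsto_coordinatewise_iff by blast
    ultimately show ?thesis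
      using tendsto_add by fastforce
  next
    case False
    then show ?thesis
      using w l by (simp add: mem_cube_iff)
  qed
qed

definition grid_point :: "nat \<Rightarrow> nat \<Rightarrow> (nat \<Rightarrow> nat) \<Rightarrow> nat \<Rightarrow> real" where
  "grid_point n p q = (\<lambda>j. if j < n then real (q j) / real p else 0)"

lemma grid_point_in_cube: "(\<And>j. j < n \<Longrightarrow> q j \<le> p) \<Longrightarrow> grid_point n p q \<in> cube n"
  by (auto simp: grid_point_def mem_cube_iff divide_le_eq_1)

lemma grid_point_close:
  assumes "q j \<le> r j" "r j \<le> q j + 1"
  shows "\<bar>grid_point n p r j - grid_point n p q j\<bar> \<le> 1 / p"
proof -
  have "\<bar>real (r j) - real (q j)\<bar> / p \<le> 1 / p"
    using assms by (intro divide_right_mono) auto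
  then show ?thesis
    by (simp add: grid_point_def diff_divide_distrib[symmetric])
qed

definition fixpoint_label :: "nat \<Rightarrow> nat \<Rightarrow> ((nat \<Rightarrow> real) \<Rightarrow> nat \<Rightarrow> real) \<Rightarrow> (nat \<Rightarrow> nat) \<Rightarrow> nat \<Rightarrow> nat"
  where "fixpoint_label n p f q i =
    (if q i \<noteq> 0 \<and> (q i = p \<or> f (grid_point n p q) i < grid_point n p q i) then 1 else 0)"

lemma fixpoint_label_0_or_1: "fixpoint_label n p f q i = 0 \<or> fixpoint_label n p f q i = 1"
  by (simp add: fixpoint_label_def)

lemma fixpoint_label_0:
  assumes "f \<in> cube n \<rightarrow> cube n" "\<forall>j<n. q j \<le> p" "i < n" "fixpoint_label n p f q i = 0"
  shows "grid_point n p q i \<le> f (grid_point n p q) i"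
  using assms funcset_mem[OF assms(1) grid_point_in_cube[of n q p]]
  by (auto simp: fixpoint_label_def grid_point_def mem_cube_iff split: if_splits)

lemma fixpoint_label_1:
  assumes "f \<in> cube n \<rightarrow> cube n" "\<forall>j<n. q j \<le> p" "i < n" "fixpoint_label n p f q i = 1" "0 < p"
  shows "f (grid_point n p q) i \<le> grid_point n p q i"
  using assms funcset_mem[OF assms(1) grid_point_in_cube[of n q p]]
  by (auto simp: fixpoint_label_def grid_point_def mem_cube_iff split: if_splits)

lemma cube_approx_fixpoint:
  fixes f :: "(nat \<Rightarrow> real) \<Rightarrow> nat \<Rightarrow> real" and p :: nat
  assumes f: "f \<in> cube n \<rightarrow> cube n" and p: "0 < p"
  shows "\<exists>z\<in>cube n. \<forall>i<n. \<exists>a\<in>cube n. \<exists>b\<in>cube n.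
    (\<forall>j<n. \<bar>a j - z j\<bar> \<le> 1 / p \<and> \<bar>b j - z j\<bar> \<le> 1 / p) \<and> a i \<le> f a i \<and> f b i \<le> b i"
proof -
  let ?g = "grid_point n p" and ?label = "fixpoint_label n p f"
  have "\<forall>q. (\<forall>i<n. q i \<le> p) \<longrightarrow> (\<forall>i<n. ?label q i = 0 \<or> ?label q i = 1)"
    using fixpoint_label_0_or_1 by blast
  moreover have "\<forall>q. (\<forall>i<n. q i \<le> p) \<longrightarrow> (\<forall>i<n. q i = 0 \<longrightarrow> ?label q i = 0)"
    by (simp add: fixpoint_label_def)
  moreover have "\<forall>q. (\<forall>i<n. q i \<le> p) \<longrightarrow> (\<forall>i<n. q i = p \<longrightarrow> ?label q i = 1)"
    using p by (auto simp: fixpoint_label_def)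
  ultimately obtain q where q: "\<forall>i<n. q i < p"
    and q_cell: "\<forall>i<n. \<exists>r s. (\<forall>j<n. q j \<le> r j \<and> r j \<le> q j + 1) \<and>
      (\<forall>j<n. q j \<le> s j \<and> s j \<le> q j + 1) \<and> ?label r i \<noteq> ?label s i"
    by (rule kuhn_lemma[OF p])
  have near: "(\<forall>j<n. r j \<le> p) \<and> ?g r \<in> cube n \<and> (\<forall>j<n. \<bar>?g r j - ?g q j\<bar> \<le> 1 / p)"
    if "\<forall>j<n. q j \<le> r j \<and> r j \<le> q j + 1" for r
  proof -
    have r_le: "r j \<le> p" if "j < n" for j
      using \<open>\<forall>j<n. q j \<le> r j \<and> r j \<le> q j + 1\<close> q that by (metis Suc_eq_plus1 Suc_leI le_trans)
    then show ?thesis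
      using that grid_point_close[of q _ r n p] grid_point_in_cube[of n r p] by simp
  qed
  have "\<exists>a\<in>cube n. \<exists>b\<in>cube n. (\<forall>j<n. \<bar>a j - ?g q j\<bar> \<le> 1 / p \<and> \<bar>b j - ?g q j\<bar> \<le> 1 / p)
      \<and> a i \<le> f a i \<and> f b i \<le> b i" if i: "i < n" for i
  proof -
    obtain r s where r: "\<forall>j<n. q j \<le> r j \<and> r j \<le> q j + 1" and s: "\<forall>j<n. q j \<le> s j \<and> s j \<le> q j + 1"
      and rs: "?label r i \<noteq> ?label s i"
      using q_cell i by blast
    have "?label r i = 0 \<and> ?label s i = 1 \<or> ?label s i = 0 \<and> ?label r i = 1"
      using rs fixpoint_label_0_or_1[of n p f r i] fixpoint_label_0_or_1[of n p f s i] by auto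
    then obtain a b where ab: "a \<in> {r, s}" "b \<in> {r, s}" "?label a i = 0" "?label b i = 1"
      by (metis insertI1 insertI2 singletonI)
    then have "\<forall>j<n. q j \<le> a j \<and> a j \<le> q j + 1" "\<forall>j<n. q j \<le> b j \<and> b j \<le> q j + 1"
      using r s by auto
    then have "?g a \<in> cube n \<and> (\<forall>j<n. \<bar>?g a j - ?g q j\<bar> \<le> 1 / p) \<and> ?g a i \<le> f (?g a) i"
      and "?g b \<in> cube n \<and> (\<forall>j<n. \<bar>?g b j - ?g q j\<bar> \<le> 1 / p) \<and> f (?g b) i \<le> ?g b i"
      using near fixpoint_label_0[OF f _ i ab(3)] fixpoint_label_1[OF f _ i ab(4) p] by simp_all
    then show ?thesis
      by blast
  qed
  moreover have "?g q \<in> cube n"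
    using q by (intro grid_point_in_cube) (simp add: less_imp_le)
  ultimately show ?thesis
    by blast
qed

lemma coordinate_fixed_by_limits:
  assumes cont: "continuous_on (cube n) f" and l: "l \<in> cube n"
    and a: "a \<longlonglongrightarrow> l" "\<And>k. a k \<in> cube n" "\<And>k. a k i \<le> f (a k) i"
    and b: "b \<longlonglongrightarrow> l" "\<And>k. b k \<in> cube n" "\<And>k. f (b k) i \<le> b k i"
  shows "f l i = l i"
proof -
  have f_i: "continuous_on (cube n) (\<lambda>x. f x i)"
    using cont by (rule continuous_on_product_then_coordinatewise)
  have a_i: "(\<lambda>k. a k i) \<longlonglongrightarrow> l i" and b_i: "(\<lambda>k. b k i) \<longlonglongrightarrow> l i"
    using a(1) b(1) unfolding tendsto_coordinatewise_iff by auto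
  have fa_i: "(\<lambda>k. f (a k) i) \<longlonglongrightarrow> f l i" and fb_i: "(\<lambda>k. f (b k) i) \<longlonglongrightarrow> f l i"
    using a b by (auto intro!: continuous_on_tendsto_compose[OF f_i _ l])
  have "l i \<le> f l i"
    using a(3) by (intro tendsto_le[OF trivial_limit_sequentially fa_i a_i]) auto
  moreover have "f l i \<le> l i"
    using b(3) by (intro tendsto_le[OF trivial_limit_sequentially b_i fb_i]) auto
  ultimately show ?thesis
    by simp
qed

lemma cube_fixpoint:
  assumes cont: "continuous_on (cube n) f" and f: "f \<in> cube n \<rightarrow> cube n"
  shows "\<exists>x\<in>cube n. f x = x"
proof -
  define near :: "nat \<Rightarrow> (nat \<Rightarrow> real) \<Rightarrow> (nat \<Rightarrow> real) \<Rightarrow> bool"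
    where "near k z a \<longleftrightarrow> a \<in> cube n \<and> (\<forall>j<n. \<bar>a j - z j\<bar> \<le> 1 / Suc k)" for k z a
  have "\<forall>k. \<exists>z\<in>cube n. \<forall>i<n. \<exists>a b. near k z a \<and> near k z b \<and> a i \<le> f a i \<and> f b i \<le> b i"
    using cube_approx_fixpoint[OF f] unfolding near_def by (metis zero_less_Suc)
  then obtain z where z: "\<And>k. z k \<in> cube n"
    and z_near: "\<And>k i. i < n \<Longrightarrow> \<exists>a b. near k (z k) a \<and> near k (z k) b \<and> a i \<le> f a i \<and> f b i \<le> b i"
    by metis
  obtain l \<rho> where l: "l \<in> cube n" and \<rho>: "strict_mono \<rho>" and lim: "(z \<circ> \<rho>) \<longlonglongrightarrow> l"
    using compact_imp_seq_compact[OF compact_cube] z unfolding seq_compact_def by metis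
  have mesh: "(\<lambda>k. 1 / real (Suc (\<rho> k))) \<longlonglongrightarrow> 0"
    using LIMSEQ_subseq_LIMSEQ[OF LIMSEQ_Suc[OF lim_inverse_n'] \<rho>] by (simp add: o_def)
  have "f l i = l i" if i: "i < n" for i
  proof -
    have "\<forall>k. \<exists>a b. near (\<rho> k) (z (\<rho> k)) a \<and> near (\<rho> k) (z (\<rho> k)) b \<and> a i \<le> f a i \<and> f b i \<le> b i"
      using z_near[OF i] by blast
    then obtain a b where ab: "\<And>k. near (\<rho> k) (z (\<rho> k)) (a k) \<and> near (\<rho> k) (z (\<rho> k)) (b k)
        \<and> a k i \<le> f (a k) i \<and> f (b k) i \<le> b k i"
      by metis
    have a: "a \<longlonglongrightarrow> l" and b: "b \<longlonglongrightarrow> l"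
      using ab by (auto simp: near_def intro!: tendsto_in_cube_if_close[OF lim mesh _ l])
    show ?thesis
      using ab by (intro coordinate_fixed_by_limits[OF cont l a _ _ b]) (auto simp: near_def)
  qed
  moreover have "f l j = l j" if "j \<ge> n" for j
    using funcset_mem[OF f l] l that by (simp add: mem_cube_iff)
  ultimately show ?thesis
    using l by (metis not_less ext)
qed

section \<open>Products of simplices are retracts of cubes\<close>

lemma fixpoint_transfer_by_retraction:
  assumes fixpoint: "\<And>g. continuous_on C g \<Longrightarrow> g \<in> C \<rightarrow> C \<Longrightarrow> \<exists>x\<in>C. g x = x"
    and r: "continuous_on C r" "r \<in> C \<rightarrow> K"
    and e: "continuous_on K e" "e \<in> K \<rightarrow> C"
    and r_e: "\<And>y. y \<in> K \<Longrightarrow> r (e y) = y"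
    and f: "continuous_on K f" "f \<in> K \<rightarrow> K"
  shows "\<exists>y\<in>K. f y = y"
proof -
  have "continuous_on C (\<lambda>x. f (r x))"
    using r by (intro continuous_on_compose2[OF f(1) r(1)]) auto
  then have "continuous_on C (\<lambda>x. e (f (r x)))"
    using r f by (intro continuous_on_compose2[OF e(1)]) auto
  moreover have "(\<lambda>x. e (f (r x))) \<in> C \<rightarrow> C"
    using r e f by auto
  ultimately obtain x where x: "x \<in> C" "e (f (r x)) = x"
    using fixpoint by fastforce
  moreover have "f (r x) \<in> K"
    using x(1) r f by blast
  ultimately have "f (r x) = r x"
    using r_e by metis
  then show ?thesis
    using x r by blast
qed

lemma continuous_on_Max_image:
  assumes "finite A" "A \<noteq> {}" "\<And>a. a \<in> A \<Longrightarrow> continuous_on K (g a)"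
  shows "continuous_on K (\<lambda>x. Max ((\<lambda>a. g a x) ` A) :: real)"
  using assms
proof (induction A rule: finite_ne_induct)
  case (singleton a)
  then show ?case
    by simp
next
  case (insert a A)
  then have "continuous_on K (\<lambda>x. max (g a x) (Max ((\<lambda>a. g a x) ` A)))"
    by (intro continuous_intros) auto
  then show ?case
    using insert by simp
qed

definition simplex_to_box :: "'s set \<Rightarrow> ('s \<Rightarrow> real) \<Rightarrow> 's \<Rightarrow> real" where
  "simplex_to_box A p s = p s / Max (p ` A)"

text \<open>Shifting by \<open>1 - Max\<close> gives the largest coordinate weight 1, so the normaliser in
  \<open>box_to_simplex\<close> is at least 1 and the map is continuous everywhere. On the image of
  \<open>simplex_to_box\<close>, whose maximum is 1, it only undoes the rescaling.\<close>

definition box_weight :: "'s set \<Rightarrow> ('s \<Rightarrow> real) \<Rightarrow> 's \<Rightarrow> real" where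
  "box_weight A x s = max 0 (x s + 1 - Max (x ` A))"

definition box_to_simplex :: "'s set \<Rightarrow> ('s \<Rightarrow> real) \<Rightarrow> 's \<Rightarrow> real" where
  "box_to_simplex A x s = (if s \<in> A then box_weight A x s / (\<Sum>t\<in>A. box_weight A x t) else 0)"

lemma sum_box_weight_ge_1:
  assumes "finite A" "A \<noteq> {}"
  shows "1 \<le> (\<Sum>t\<in>A. box_weight A x t)"
proof -
  have "Max (x ` A) \<in> x ` A"
    using assms by simp
  then obtain t where t: "t \<in> A" "x t = Max (x ` A)"
    by auto
  then have "box_weight A x t = 1"
    by (simp add: box_weight_def)
  moreover have "box_weight A x t \<le> (\<Sum>t\<in>A. box_weight A x t)"
    using assms t by (intro member_le_sum) (auto simp: box_weight_def)
  ultimately show ?thesis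
    by simp
qed

lemma box_to_simplex_mixed_strat:
  assumes "finite (S i)" "S i \<noteq> {}"
  shows "box_to_simplex (S i) x \<in> mixed_strats S i"
proof -
  have pos: "0 < (\<Sum>t\<in>S i. box_weight (S i) x t)"
    using sum_box_weight_ge_1[OF assms, of x] by linarith
  then have "(\<Sum>s\<in>S i. box_to_simplex (S i) x s) = 1"
    by (simp add: box_to_simplex_def sum_divide_distrib[symmetric])
  then show ?thesis
    using pos by (auto simp: mixed_strats_def box_to_simplex_def box_weight_def)
qed

lemma box_to_simplex_cong:
  assumes "\<And>s. s \<in> A \<Longrightarrow> x s = y s"
  shows "box_to_simplex A x = box_to_simplex A y"
proof -
  have "x ` A = y ` A"
    using assms by (rule image_cong[OF refl])
  then show ?thesis
    using assms by (auto simp: box_to_simplex_def box_weight_def intro!: sum.cong)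
qed

lemma Max_mixed_strat_pos:
  assumes "p \<in> mixed_strats S i" "finite (S i)"
  shows "0 < Max (p ` S i)"
proof (rule ccontr)
  assume "\<not> 0 < Max (p ` S i)"
  moreover have "p s \<le> Max (p ` S i)" if "s \<in> S i" for s
    using assms(2) that by simp
  ultimately have "\<forall>s\<in>S i. p s \<le> 0"
    by force
  then have "sum p (S i) \<le> 0"
    by (simp add: sum_nonpos)
  then show False
    using assms(1) by (simp add: mixed_strats_def)
qed

lemma simplex_to_box_bounds:
  assumes "p \<in> mixed_strats S i" "finite (S i)"
  shows "0 \<le> simplex_to_box (S i) p s \<and> simplex_to_box (S i) p s \<le> 1"
proof (cases "s \<in> S i")
  case True
  then have "p s \<le> Max (p ` S i)"
    using assms(2) by simp
  then show ?thesis
    using assms Max_mixed_strat_pos[OF assms] by (simp add: simplex_to_box_def mixed_strats_def)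
next
  case False
  then show ?thesis
    using assms by (simp add: simplex_to_box_def mixed_strats_def)
qed

lemma box_to_simplex_simplex_to_box:
  assumes p: "p \<in> mixed_strats S i" and fin: "finite (S i)"
  shows "box_to_simplex (S i) (simplex_to_box (S i) p) = p"
proof
  fix s
  define M where "M = Max (p ` S i)"
  have M: "0 < M"
    unfolding M_def using Max_mixed_strat_pos[OF p fin] .
  have "S i \<noteq> {}"
    using p by (auto simp: mixed_strats_def)
  then have "M \<in> p ` S i"
    unfolding M_def using fin by simp
  then obtain t where t: "t \<in> S i" "p t = M"
    by auto
  have "Max (simplex_to_box (S i) p ` S i) = 1"
  proof (rule Max_eqI)
    show "y \<le> 1" if "y \<in> simplex_to_box (S i) p ` S i" for y
      using that simplex_to_box_bounds[OF p fin] by auto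
    show "1 \<in> simplex_to_box (S i) p ` S i"
      using t M by (auto simp: simplex_to_box_def M_def intro!: image_eqI[of _ _ t])
  qed (use fin in auto)
  then have weight: "box_weight (S i) (simplex_to_box (S i) p) t = p t / M" for t
    using p M by (simp add: box_weight_def simplex_to_box_def M_def mixed_strats_def)
  have "(\<Sum>t\<in>S i. p t / M) = 1 / M"
    using p by (simp add: sum_divide_distrib[symmetric] mixed_strats_def)
  then show "box_to_simplex (S i) (simplex_to_box (S i) p) s = p s"
    using M p by (simp add: box_to_simplex_def weight mixed_strats_def)
qed

lemma continuous_on_box_to_simplex:
  assumes "finite A" "A \<noteq> {}" "\<And>t. continuous_on K (\<lambda>y. \<phi> y t)"
  shows "continuous_on K (\<lambda>y. box_to_simplex A (\<phi> y) s)"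
proof -
  have weight: "continuous_on K (\<lambda>y. box_weight A (\<phi> y) t)" for t
    unfolding box_weight_def using assms by (intro continuous_intros continuous_on_Max_image) auto
  have "(\<Sum>t\<in>A. box_weight A (\<phi> y) t) \<noteq> 0" for y
    using sum_box_weight_ge_1[OF assms(1,2)] by (metis not_one_le_zero)
  then show ?thesis
    unfolding box_to_simplex_def using weight by (cases "s \<in> A") (auto intro!: continuous_intros)
qed

lemma continuous_on_simplex_to_box:
  assumes "finite A" "A \<noteq> {}" "\<And>t. continuous_on K (\<lambda>y. \<phi> y t)"
    and "\<And>y. y \<in> K \<Longrightarrow> Max (\<phi> y ` A) \<noteq> 0"
  shows "continuous_on K (\<lambda>y. simplex_to_box A (\<phi> y) s)"
  unfolding simplex_to_box_def using assms
  by (intro continuous_intros continuous_on_Max_image) auto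

lemma continuous_on_coordinate: "continuous_on A (\<lambda>x. x i :: 'b :: topological_space)"
  by (rule continuous_on_subset[OF continuous_on_product_coordinates]) simp

lemma continuous_on_profile_entry: "continuous_on A (\<lambda>\<sigma> :: 'i \<Rightarrow> 's \<Rightarrow> real. \<sigma> i s)"
  by (rule continuous_on_product_then_coordinatewise[OF continuous_on_coordinate])

text \<open>The cube coordinates enumerate the pairs \<open>(i, s) \<in> Sigma N S\<close>: \<open>h\<close> maps coordinates to
  pairs and \<open>idx\<close> is its inverse.\<close>

definition cube_to_profile :: "'i set \<Rightarrow> ('i \<Rightarrow> 's set) \<Rightarrow> ('i \<times> 's \<Rightarrow> nat) \<Rightarrow> (nat \<Rightarrow> real) \<Rightarrow> ('i, 's) profile"
  where "cube_to_profile N S idx x = (\<lambda>i\<in>N. box_to_simplex (S i) (\<lambda>s. x (idx (i, s))))"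

definition profile_to_cube :: "('i \<Rightarrow> 's set) \<Rightarrow> nat \<Rightarrow> (nat \<Rightarrow> 'i \<times> 's) \<Rightarrow> ('i, 's) profile \<Rightarrow> nat \<Rightarrow> real"
  where "profile_to_cube S m h \<sigma> =
    (\<lambda>j. if j < m then simplex_to_box (S (fst (h j))) (\<sigma> (fst (h j))) (snd (h j)) else 0)"

lemma mixed_profile_strat: "\<sigma> \<in> mixed_profiles N S \<Longrightarrow> i \<in> N \<Longrightarrow> \<sigma> i \<in> mixed_strats S i"
  by (auto simp: mixed_profiles_def)

lemma continuous_on_cube_to_profile:
  assumes "\<forall>i\<in>N. finite (S i) \<and> S i \<noteq> {}"
  shows "continuous_on A (cube_to_profile N S idx)"
proof (intro continuous_on_coordinatewise_then_product)
  fix i s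
  show "continuous_on A (\<lambda>x. cube_to_profile N S idx x i s)"
    using assms by (cases "i \<in> N")
      (simp_all add: cube_to_profile_def continuous_on_box_to_simplex continuous_on_coordinate)
qed

lemma cube_to_profile_mixed:
  assumes "\<forall>i\<in>N. finite (S i) \<and> S i \<noteq> {}"
  shows "cube_to_profile N S idx x \<in> mixed_profiles N S"
  using assms by (auto simp: cube_to_profile_def mixed_profiles_def intro!: box_to_simplex_mixed_strat)

lemma continuous_on_profile_to_cube:
  assumes S: "\<forall>i\<in>N. finite (S i)" and h: "h ` {..<m} \<subseteq> Sigma N S"
  shows "continuous_on (mixed_profiles N S) (profile_to_cube S m h)"
proof (intro continuous_on_coordinatewise_then_product)
  fix j
  show "continuous_on (mixed_profiles N S) (\<lambda>\<sigma>. profile_to_cube S m h \<sigma> j)"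
  proof (cases "j < m")
    case True
    then obtain i s where ij: "h j = (i, s)" "i \<in> N" "s \<in> S i"
      using h by force
    have "Max (\<sigma> i ` S i) \<noteq> 0" if "\<sigma> \<in> mixed_profiles N S" for \<sigma>
      using Max_mixed_strat_pos[OF mixed_profile_strat[OF that ij(2)]] S ij(2) by simp
    then have "continuous_on (mixed_profiles N S) (\<lambda>\<sigma>. simplex_to_box (S i) (\<sigma> i) s)"
      using S ij by (intro continuous_on_simplex_to_box continuous_on_profile_entry) auto
    then show ?thesis
      using True ij by (simp add: profile_to_cube_def)
  qed (simp add: profile_to_cube_def)
qed

lemma profile_to_cube_in_cube:
  assumes S: "\<forall>i\<in>N. finite (S i)" and h: "h ` {..<m} \<subseteq> Sigma N S" and \<sigma>: "\<sigma> \<in> mixed_profiles N S"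
  shows "profile_to_cube S m h \<sigma> \<in> cube m"
proof -
  have "0 \<le> profile_to_cube S m h \<sigma> j \<and> profile_to_cube S m h \<sigma> j \<le> 1" if "j < m" for j
  proof -
    obtain i s where "h j = (i, s)" "i \<in> N"
      using h \<open>j < m\<close> by force
    then show ?thesis
      using \<open>j < m\<close> S simplex_to_box_bounds[OF mixed_profile_strat[OF \<sigma>]] by (simp add: profile_to_cube_def)
  qed
  then show ?thesis
    by (simp add: mem_cube_iff profile_to_cube_def)
qed

lemma cube_to_profile_profile_to_cube:
  assumes S: "\<forall>i\<in>N. finite (S i)" and idx: "\<And>p. p \<in> Sigma N S \<Longrightarrow> idx p < m \<and> h (idx p) = p"
    and \<sigma>: "\<sigma> \<in> mixed_profiles N S"
  shows "cube_to_profile N S idx (profile_to_cube S m h \<sigma>) = \<sigma>"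
proof
  fix i
  show "cube_to_profile N S idx (profile_to_cube S m h \<sigma>) i = \<sigma> i"
  proof (cases "i \<in> N")
    case True
    have "profile_to_cube S m h \<sigma> (idx (i, s)) = simplex_to_box (S i) (\<sigma> i) s" if "s \<in> S i" for s
      using idx[of "(i, s)"] True that by (simp add: profile_to_cube_def)
    then have "box_to_simplex (S i) (\<lambda>s. profile_to_cube S m h \<sigma> (idx (i, s)))
        = box_to_simplex (S i) (simplex_to_box (S i) (\<sigma> i))"
      by (rule box_to_simplex_cong)
    also have "\<dots> = \<sigma> i"
      using box_to_simplex_simplex_to_box[OF mixed_profile_strat[OF \<sigma> True]] S True by simp
    finally show ?thesis
      using True by (simp add: cube_to_profile_def)
  next
    case False
    then show ?thesis
      using \<sigma> PiE_arb[of \<sigma> N "mixed_strats S" i] by (simp add: cube_to_profile_def mixed_profiles_def)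
  qed
qed

lemma mixed_profiles_fixpoint:
  fixes N :: "'i set" and S :: "'i \<Rightarrow> 's set" and f :: "('i, 's) profile \<Rightarrow> ('i, 's) profile"
  assumes fin: "finite N" and S: "\<forall>i\<in>N. finite (S i) \<and> S i \<noteq> {}"
    and f: "continuous_on (mixed_profiles N S) f" "f \<in> mixed_profiles N S \<rightarrow> mixed_profiles N S"
  shows "\<exists>\<sigma>\<in>mixed_profiles N S. f \<sigma> = \<sigma>"
proof -
  define m where "m = card (Sigma N S)"
  obtain h where h: "bij_betw h {..<m} (Sigma N S)"
    using ex_bij_betw_nat_finite[of "Sigma N S"] fin S unfolding m_def atLeast0LessThan by blast
  define idx where "idx = inv_into {..<m} h"
  have idx: "idx p < m \<and> h (idx p) = p" if "p \<in> Sigma N S" for p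
    using that h inv_into_into[of p h "{..<m}"] unfolding idx_def bij_betw_def by (simp add: f_inv_into_f)
  have S_fin: "\<forall>i\<in>N. finite (S i)"
    using S by blast
  have h_into: "h ` {..<m} \<subseteq> Sigma N S"
    using h by (simp add: bij_betw_def)
  show ?thesis
  proof (rule fixpoint_transfer_by_retraction[OF cube_fixpoint])
    show "continuous_on (cube m) (cube_to_profile N S idx)"
      using S by (rule continuous_on_cube_to_profile)
    show "cube_to_profile N S idx \<in> cube m \<rightarrow> mixed_profiles N S"
      using S cube_to_profile_mixed by blast
    show "continuous_on (mixed_profiles N S) (profile_to_cube S m h)"
      using S_fin h_into by (rule continuous_on_profile_to_cube)
    show "profile_to_cube S m h \<in> mixed_profiles N S \<rightarrow> cube m"
      using S_fin h_into profile_to_cube_in_cube by blast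
    show "cube_to_profile N S idx (profile_to_cube S m h \<sigma>) = \<sigma>" if "\<sigma> \<in> mixed_profiles N S" for \<sigma>
      using S_fin idx that by (rule cube_to_profile_profile_to_cube)
  qed (use f in simp_all)
qed

section \<open>Existence of Nash equilibria\<close>

definition regret :: "'i set \<Rightarrow> ('i \<Rightarrow> 's set) \<Rightarrow> ('i, 's) payoff \<Rightarrow> ('i, 's) profile \<Rightarrow> 'i \<Rightarrow> 's \<Rightarrow> real"
  where "regret N S Q \<sigma> i s = max 0 (exp_payoff N S Q (\<sigma>(i := indicator {s})) i - exp_payoff N S Q \<sigma> i)"

definition nash_map :: "'i set \<Rightarrow> ('i \<Rightarrow> 's set) \<Rightarrow> ('i, 's) payoff \<Rightarrow> ('i, 's) profile \<Rightarrow> ('i, 's) profile"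
  where "nash_map N S Q \<sigma> = (\<lambda>i\<in>N. \<lambda>s. if s \<in> S i
     then (\<sigma> i s + regret N S Q \<sigma> i s) / (1 + (\<Sum>t\<in>S i. regret N S Q \<sigma> i t)) else 0)"

lemma regret_nonneg: "0 \<le> regret N S Q \<sigma> i s"
  by (simp add: regret_def)

lemma exp_payoff_fun_upd:
  assumes fin: "finite N" and i: "i \<in> N" and S: "finite (S i)"
  shows "exp_payoff N S Q (\<sigma>(i := \<tau>)) k = (\<Sum>s\<in>S i. \<tau> s * exp_payoff N S Q (\<sigma>(i := indicator {s})) k)"
proof -
  define rest where "rest v = (\<Prod>j\<in>N - {i}. \<sigma> j (v j)) * Q v k" for v
  have prod: "(\<Prod>j\<in>N. (\<sigma>(i := \<rho>)) j (v j)) * Q v k = \<rho> (v i) * rest v" for \<rho> v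
    by (simp add: prod.remove[OF fin i] rest_def)
  have "(\<Sum>s\<in>S i. \<tau> s * exp_payoff N S Q (\<sigma>(i := indicator {s})) k)
      = (\<Sum>v\<in>positions N S. \<Sum>s\<in>S i. \<tau> s * (indicator {s} (v i) * rest v))"
    unfolding exp_payoff_def prod by (simp add: sum_distrib_left sum.swap[of _ "S i"])
  also have "\<dots> = (\<Sum>v\<in>positions N S. \<tau> (v i) * rest v)"
  proof (rule sum.cong[OF refl])
    fix v assume "v \<in> positions N S"
    then have "v i \<in> S i"
      using i by (auto simp: positions_def PiE_iff)
    have "(\<Sum>s\<in>S i. \<tau> s * (indicator {s} (v i) * rest v)) = (\<Sum>s\<in>S i. if s = v i then \<tau> s * rest v else 0)"
      by (rule sum.cong) auto
    then show "(\<Sum>s\<in>S i. \<tau> s * (indicator {s} (v i) * rest v)) = \<tau> (v i) * rest v"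
      using S \<open>v i \<in> S i\<close> by simp
  qed
  also have "\<dots> = exp_payoff N S Q (\<sigma>(i := \<tau>)) k"
    unfolding exp_payoff_def prod ..
  finally show ?thesis ..
qed

lemma exists_support_le_average:
  fixes p U :: "'s \<Rightarrow> real"
  assumes "finite A" "\<And>s. s \<in> A \<Longrightarrow> 0 \<le> p s" "sum p A = 1"
  shows "\<exists>s\<in>A. 0 < p s \<and> U s \<le> (\<Sum>t\<in>A. p t * U t)"
proof (rule ccontr)
  define u where "u = (\<Sum>t\<in>A. p t * U t)"
  assume "\<not> ?thesis"
  then have above: "u < U s" if "s \<in> A" "0 < p s" for s
    using that unfolding u_def by fastforce
  obtain s where s: "s \<in> A" "0 < p s"
    using assms by (metis less_eq_real_def sum.neutral zero_neq_one)
  have "(\<Sum>t\<in>A. p t * u) < (\<Sum>t\<in>A. p t * U t)"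
  proof (rule sum_strict_mono_ex1[OF assms(1)])
    show "\<forall>t\<in>A. p t * u \<le> p t * U t"
      using above assms(2) by (metis less_eq_real_def mult_left_mono mult_zero_left order_refl)
    show "\<exists>t\<in>A. p t * u < p t * U t"
      using s above[OF s] by (auto intro!: bexI[OF _ s(1)] mult_strict_left_mono)
  qed
  moreover have "(\<Sum>t\<in>A. p t * u) = u"
    using assms(3) by (simp add: sum_distrib_right[symmetric])
  ultimately show False
    unfolding u_def by simp
qed

lemma nash_map_mixed_profile:
  assumes S: "\<forall>i\<in>N. finite (S i)" and \<sigma>: "\<sigma> \<in> mixed_profiles N S"
  shows "nash_map N S Q \<sigma> \<in> mixed_profiles N S"
  unfolding mixed_profiles_def
proof (rule PiE_I)
  fix i assume i: "i \<in> N"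
  define G where "G = (\<Sum>t\<in>S i. regret N S Q \<sigma> i t)"
  have G: "0 \<le> G"
    unfolding G_def by (simp add: sum_nonneg regret_nonneg)
  have \<sigma>_i: "\<sigma> i \<in> mixed_strats S i"
    using \<sigma> i by (rule mixed_profile_strat)
  have "(\<Sum>s\<in>S i. (\<sigma> i s + regret N S Q \<sigma> i s) / (1 + G)) = (1 + G) / (1 + G)"
    using \<sigma>_i by (simp add: sum_divide_distrib[symmetric] sum.distrib G_def mixed_strats_def)
  then show "nash_map N S Q \<sigma> i \<in> mixed_strats S i"
    using i G \<sigma>_i regret_nonneg[of N S Q \<sigma> i]
    by (auto simp: nash_map_def mixed_strats_def G_def)
qed (simp add: nash_map_def)

lemma continuous_on_exp_payoff:
  assumes "\<And>j t. continuous_on A (\<lambda>x. \<tau> x j t)"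
  shows "continuous_on A (\<lambda>x. exp_payoff N S Q (\<tau> x) k)"
  unfolding exp_payoff_def using assms by (intro continuous_intros) auto

lemma continuous_on_nash_map: "continuous_on A (nash_map N S Q)"
proof (intro continuous_on_coordinatewise_then_product)
  fix i s
  have regret: "continuous_on A (\<lambda>\<sigma>. regret N S Q \<sigma> i t)" for t
  proof -
    have "continuous_on A (\<lambda>\<sigma>. (\<sigma>(i := indicator {t})) j t')" for j t'
      by (cases "j = i") (simp_all add: continuous_on_profile_entry)
    then show ?thesis
      unfolding regret_def
      by (intro continuous_intros continuous_on_exp_payoff continuous_on_profile_entry)
  qed
  have "1 + (\<Sum>t\<in>S i. regret N S Q \<sigma> i t) \<noteq> 0" for \<sigma>
    using sum_nonneg[of "S i" "regret N S Q \<sigma> i"] regret_nonneg by (metis add_nonneg_eq_0_iff zero_le_one one_neq_zero)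
  then show "continuous_on A (\<lambda>\<sigma>. nash_map N S Q \<sigma> i s)"
    unfolding nash_map_def using regret
    by (cases "i \<in> N"; cases "s \<in> S i") (auto intro!: continuous_intros continuous_on_profile_entry)
qed


lemma nash_map_fixpoint_no_regret:
  assumes fin: "finite N" and S_i: "finite (S i)" and i: "i \<in> N"
    and \<sigma>: "\<sigma> \<in> mixed_profiles N S" and fixed: "nash_map N S Q \<sigma> = \<sigma>" and t: "t \<in> S i"
  shows "regret N S Q \<sigma> i t = 0"
proof -
  \<comment> \<open>A strategy in the support doing no better than the average has no regret, so the fixed point
    equation at it forces the normaliser \<open>1 + G\<close> to be 1.\<close>
  define U where "U s = exp_payoff N S Q (\<sigma>(i := indicator {s})) i" for s
  define G where "G = (\<Sum>t\<in>S i. regret N S Q \<sigma> i t)"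
  have "exp_payoff N S Q \<sigma> i = (\<Sum>s\<in>S i. \<sigma> i s * U s)"
    using exp_payoff_fun_upd[where S = S and \<sigma> = \<sigma> and \<tau> = "\<sigma> i", OF fin i S_i] by (simp add: U_def)
  moreover have "\<sigma> i \<in> mixed_strats S i"
    using \<sigma> i by (rule mixed_profile_strat)
  ultimately obtain s0 where s0: "s0 \<in> S i" "0 < \<sigma> i s0" "U s0 \<le> exp_payoff N S Q \<sigma> i"
    using exists_support_le_average[OF S_i, of "\<sigma> i" U] by (auto simp: mixed_strats_def)
  then have "regret N S Q \<sigma> i s0 = 0"
    by (simp add: regret_def U_def)
  moreover have "\<sigma> i s0 = (\<sigma> i s0 + regret N S Q \<sigma> i s0) / (1 + G)"
    using fun_cong[OF fun_cong[OF fixed, of i], of s0] i s0 by (simp add: nash_map_def G_def)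
  moreover have "0 \<le> G"
    unfolding G_def by (simp add: sum_nonneg regret_nonneg)
  ultimately have "G = 0"
    using s0(2) by (simp add: field_simps)
  then show ?thesis
    using t S_i unfolding G_def by (simp add: sum_nonneg_eq_0_iff regret_nonneg)
qed

lemma no_regret_imp_best_response:
  assumes fin: "finite N" and i: "i \<in> N" and S_i: "finite (S i)"
    and no_regret: "\<And>t. t \<in> S i \<Longrightarrow> regret N S Q \<sigma> i t = 0" and \<tau>: "\<tau> \<in> mixed_strats S i"
  shows "exp_payoff N S Q (\<sigma>(i := \<tau>)) i \<le> exp_payoff N S Q \<sigma> i"
proof -
  let ?u = "exp_payoff N S Q \<sigma> i"
  have best: "exp_payoff N S Q (\<sigma>(i := indicator {t})) i \<le> ?u" if "t \<in> S i" for t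
    using no_regret[OF that] by (auto simp: regret_def max_def split: if_splits)
  have "exp_payoff N S Q (\<sigma>(i := \<tau>)) i = (\<Sum>s\<in>S i. \<tau> s * exp_payoff N S Q (\<sigma>(i := indicator {s})) i)"
    by (rule exp_payoff_fun_upd[where S = S, OF fin i S_i])
  also have "\<dots> \<le> (\<Sum>s\<in>S i. \<tau> s * ?u)"
    using \<tau> best by (intro sum_mono mult_left_mono) (auto simp: mixed_strats_def)
  also have "\<dots> = ?u"
    using \<tau> by (simp add: sum_distrib_right[symmetric] mixed_strats_def)
  finally show ?thesis .
qed

lemma nash_map_fixpoint_imp_nash:
  assumes fin: "finite N" and S: "\<forall>i\<in>N. finite (S i)"
    and \<sigma>: "\<sigma> \<in> mixed_profiles N S" and fixed: "nash_map N S Q \<sigma> = \<sigma>"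
  shows "nash N S Q \<sigma>"
  unfolding nash_def
proof (intro conjI ballI \<sigma>)
  fix i \<tau> assume i: "i \<in> N" and "\<tau> \<in> mixed_strats S i"
  moreover have "finite (S i)"
    using S i by blast
  ultimately show "exp_payoff N S Q (\<sigma>(i := \<tau>)) i \<le> exp_payoff N S Q \<sigma> i"
    using nash_map_fixpoint_no_regret[OF fin _ i \<sigma> fixed] by (intro no_regret_imp_best_response[OF fin i])
qed

theorem nash_equilibrium_exists:
  assumes fin: "finite N" and S: "\<forall>i\<in>N. finite (S i) \<and> S i \<noteq> {}"
  shows "\<exists>\<sigma>. nash N S Q \<sigma>"
proof -
  have S_fin: "\<forall>i\<in>N. finite (S i)"
    using S by blast
  have "nash_map N S Q \<in> mixed_profiles N S \<rightarrow> mixed_profiles N S"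
    by (rule funcsetI) (rule nash_map_mixed_profile[OF S_fin])
  then obtain \<sigma> where \<sigma>: "\<sigma> \<in> mixed_profiles N S" "nash_map N S Q \<sigma> = \<sigma>"
    using mixed_profiles_fixpoint[OF fin S continuous_on_nash_map] by blast
  then have "nash N S Q \<sigma>"
    by (rule nash_map_fixpoint_imp_nash[OF fin S_fin])
  then show ?thesis
    by blast
qed

section \<open>Stabilisation of adaptation\<close>

lemma relpow_Suc_imp_relpow:
  fixes f :: "'a \<Rightarrow> nat"
  assumes step: "\<And>x y. (x, y) \<in> R \<Longrightarrow> y = x \<or> f y < f x"
  shows "(a, b) \<in> R ^^ Suc t \<Longrightarrow> f a \<le> t \<Longrightarrow> (a, b) \<in> R ^^ t"
proof (induction t arbitrary: a)
  case 0
  then show ?case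
    using step by fastforce
next
  case (Suc t)
  then obtain c where c: "(a, c) \<in> R" "(c, b) \<in> R ^^ Suc t"
    using relpow_Suc_D2 by metis
  show ?case
  proof (cases "c = a")
    case False
    then have "(c, b) \<in> R ^^ t"
      using Suc step[OF c(1)] c(2) by fastforce
    then show ?thesis
      by (rule relpow_Suc_I2[OF c(1)])
  qed (use c in simp)
qed

lemma relpow_imp_relpow_Suc:
  fixes f :: "'a \<Rightarrow> nat"
  assumes step: "\<And>x y. (x, y) \<in> R \<Longrightarrow> y = x \<or> f y < f x"
  shows "(a, b) \<in> R ^^ t \<Longrightarrow> f a < t \<Longrightarrow> (a, b) \<in> R ^^ Suc t"
proof (induction t arbitrary: a)
  case (Suc t)
  then obtain c where c: "(a, c) \<in> R" "(c, b) \<in> R ^^ t"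
    using relpow_Suc_D2 by metis
  show ?case
  proof (cases "c = a")
    case True
    then have "(c, b) \<in> R ^^ Suc t"
      using Suc.prems(1) by simp
    then show ?thesis
      by (rule relpow_Suc_I2[OF c(1)])
  next
    case False
    then have "(c, b) \<in> R ^^ Suc t"
      using Suc step[OF c(1)] c(2) by fastforce
    then show ?thesis
      by (rule relpow_Suc_I2[OF c(1)])
  qed
qed simp

lemma relpow_Image_stabilises:
  fixes f :: "'a \<Rightarrow> nat"
  assumes "\<And>x y. (x, y) \<in> R \<Longrightarrow> y = x \<or> f y < f x" and "f a < t"
  shows "(R ^^ Suc t) `` {a} = (R ^^ t) `` {a}"
  using relpow_Suc_imp_relpow[OF assms(1)] relpow_imp_relpow_Suc[OF assms(1)] assms(2) by fastforce

lemma exists_terminal_in_closed_set: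
  fixes f :: "'a \<Rightarrow> nat"
  assumes step: "\<And>x y. (x, y) \<in> R \<Longrightarrow> y = x \<or> f y < f x"
    and closed: "R `` X \<subseteq> X" and "X \<noteq> {}"
  shows "\<exists>x\<in>X. \<forall>y. (x, y) \<in> R \<longrightarrow> y = x"
proof -
  obtain x where x: "x \<in> X" and least: "\<And>y. y \<in> X \<Longrightarrow> f x \<le> f y"
    using ex_has_least_nat[of "\<lambda>x. x \<in> X"] \<open>X \<noteq> {}\<close> by blast
  have "y = x" if "(x, y) \<in> R" for y
    using step[OF that] least[of y] closed x that by fastforce
  then show ?thesis
    using x by blast
qed

lemma NME_nonempty:
  assumes "finite N" "\<forall>i\<in>N. finite (S i) \<and> S i \<noteq> {}"
  shows "NME N S mG \<noteq> {}"
proof -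
  have "\<forall>i. \<exists>\<tau>. nash N S (snd mG i) \<tau>"
    using nash_equilibrium_exists[OF assms] by blast
  then obtain \<tau> where \<tau>: "\<And>i. nash N S (snd mG i) (\<tau> i)"
    by metis
  define \<sigma> where "\<sigma> = (\<lambda>i\<in>N. \<tau> i i)"
  have "\<sigma> \<in> mixed_profiles N S"
    using \<tau> by (auto simp: \<sigma>_def nash_def mixed_profiles_def)
  moreover have "\<forall>i\<in>N. \<exists>\<tau>'. nash N S (snd mG i) \<tau>' \<and> \<sigma> i = \<tau>' i"
    using \<tau> by (auto simp: \<sigma>_def)
  ultimately show ?thesis
    unfolding NME_def by blast
qed

lemma chi_nonempty:
  assumes "\<sigma> \<in> mixed_profiles N S"
  shows "chi N S \<sigma> \<noteq> {}"
proof -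
  have "{s \<in> S i. \<sigma> i s \<noteq> 0} \<noteq> {}" if "i \<in> N" for i
  proof
    assume "{s \<in> S i. \<sigma> i s \<noteq> 0} = {}"
    then have "sum (\<sigma> i) (S i) = 0"
      by (auto intro: sum.neutral)
    then show False
      using assms that by (simp add: mixed_profiles_def mixed_strats_def PiE_iff)
  qed
  then show ?thesis
    by (simp add: chi_def PiE_eq_empty_iff)
qed

lemma chi_subset_positions: "chi N S \<sigma> \<subseteq> positions N S"
  unfolding chi_def positions_def by (rule PiE_mono) auto

definition adapt_rel :: "'i set \<Rightarrow> ('i \<Rightarrow> 's set) \<Rightarrow> ('i, 's) mgame rel" where
  "adapt_rel N S = {(mG, adapt N mG u) | mG \<sigma> u. \<sigma> \<in> NME N S mG \<and> u \<in> chi N S \<sigma>}"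

lemma AD_eq_Image: "AD N S M = adapt_rel N S `` M"
  unfolding AD_def adapt_rel_def by blast

lemma AD_iter_eq_relpow_Image: "AD_iter t N S M = (adapt_rel N S ^^ t) `` M"
  by (induction t) (simp_all add: AD_iter_def AD_eq_Image relcomp_Image)

lemma AD_iter_nonempty:
  assumes "finite N" "\<forall>i\<in>N. finite (S i) \<and> S i \<noteq> {}" "M \<noteq> {}"
  shows "AD_iter t N S M \<noteq> {}"
proof (induction t)
  case (Suc t)
  then obtain mG where mG: "mG \<in> AD_iter t N S M"
    by blast
  obtain \<sigma> where \<sigma>: "\<sigma> \<in> NME N S mG"
    using NME_nonempty[OF assms(1,2)] by blast
  then obtain u where "u \<in> chi N S \<sigma>"
    using chi_nonempty by (fastforce simp: NME_def)
  then have "adapt N mG u \<in> AD N S (AD_iter t N S M)"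
    using mG \<sigma> unfolding AD_def by blast
  then show ?case
    by (auto simp: AD_iter_def)
qed (simp add: AD_iter_def assms(3))

definition disagreement :: "'i set \<Rightarrow> ('i \<Rightarrow> 's set) \<Rightarrow> ('i, 's) mgame \<Rightarrow> ('i \<Rightarrow> 's) set" where
  "disagreement N S mG = {v \<in> positions N S. \<exists>j\<in>N. snd mG j v \<noteq> fst mG v}"

lemma disagreement_adapt: "disagreement N S (adapt N mG u) = disagreement N S mG - {u}"
  by (auto simp: disagreement_def adapt_def)

lemma adapt_outside_disagreement:
  assumes "u \<in> positions N S" "u \<notin> disagreement N S mG"
  shows "adapt N mG u = mG"
proof -
  have "(\<lambda>j. if j \<in> N then (snd mG j)(u := fst mG u) else snd mG j) = snd mG"
    using assms by (intro ext) (auto simp: disagreement_def)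
  then show ?thesis
    by (simp add: adapt_def)
qed

lemma adapt_rel_loop_or_descent:
  assumes "finite N" "\<forall>i\<in>N. finite (S i)" and "(mG, mG') \<in> adapt_rel N S"
  shows "mG' = mG \<or> card (disagreement N S mG') < card (disagreement N S mG)"
proof -
  obtain \<sigma> u where u: "u \<in> chi N S \<sigma>" and mG': "mG' = adapt N mG u"
    using assms(3) by (auto simp: adapt_rel_def)
  have "finite (disagreement N S mG)"
    using assms(1,2) by (auto simp: disagreement_def positions_def finite_PiE)
  moreover have "u \<in> positions N S"
    using u chi_subset_positions by blast
  ultimately show ?thesis
    using adapt_outside_disagreement[of u N S mG] card_Diff1_less[of "disagreement N S mG" u] mG'
    by (cases "u \<in> disagreement N S mG") (simp_all add: disagreement_adapt del: card_Diff_insert)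
qed

lemma adapt_rel_Image_AD_inf:
  assumes "finite N" "\<forall>i\<in>N. finite (S i)"
  shows "adapt_rel N S `` AD_inf N S {mG} \<subseteq> AD_inf N S {mG}"
proof -
  let ?d = "\<lambda>g. card (disagreement N S g)"
  have step: "\<And>g g'. (g, g') \<in> adapt_rel N S \<Longrightarrow> g' = g \<or> ?d g' < ?d g"
    using adapt_rel_loop_or_descent assms by blast
  have "AD_iter (Suc (Suc (?d mG))) N S {mG} = AD_iter (Suc (?d mG)) N S {mG}"
    unfolding AD_iter_eq_relpow_Image by (rule relpow_Image_stabilises[where f = ?d, OF step]) auto
  then have "\<exists>t. AD_iter (Suc t) N S {mG} = AD_iter t N S {mG}"
    by blast
  then have "AD_iter (Suc (AD_length N S {mG})) N S {mG} = AD_inf N S {mG}"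
    unfolding AD_length_def AD_inf_def by (rule LeastI_ex)
  then show ?thesis
    by (simp add: AD_inf_def AD_iter_eq_relpow_Image relcomp_Image)
qed

theorem proposition15:
  fixes N :: "'i set" and S :: "'i \<Rightarrow> 's set" and mG :: "('i, 's) mgame"
  assumes "finite N"
    and "\<forall>i\<in>N. finite (S i) \<and> S i \<noteq> {}"
    and "\<forall>i\<in>N. \<forall>j\<in>N. card (S i) = card (S j)"
  shows "SME N S mG \<noteq> {}"
proof -
  let ?R = "adapt_rel N S" and ?d = "\<lambda>g. card (disagreement N S g)" and ?X = "AD_inf N S {mG}"
  have step: "\<And>g g'. (g, g') \<in> ?R \<Longrightarrow> g' = g \<or> ?d g' < ?d g"
    using adapt_rel_loop_or_descent assms(1,2) by blast
  have "?R `` ?X \<subseteq> ?X"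
    using assms(1,2) by (simp add: adapt_rel_Image_AD_inf)
  moreover have "?X \<noteq> {}"
    unfolding AD_inf_def using AD_iter_nonempty assms(1,2) by blast
  ultimately obtain g where g: "g \<in> ?X" and terminal: "\<And>g'. (g, g') \<in> ?R \<Longrightarrow> g' = g"
    using exists_terminal_in_closed_set[where R = ?R and f = ?d, OF step] by blast
  obtain \<sigma> where \<sigma>: "\<sigma> \<in> NME N S g"
    using NME_nonempty assms(1,2) by blast
  have "adapt N g v = g" if "v \<in> chi N S \<sigma>" for v
  proof (rule terminal)
    show "(g, adapt N g v) \<in> ?R"
      using \<sigma> that unfolding adapt_rel_def by blast
  qed
  then have "\<sigma> \<in> SME N S mG"
    unfolding SME_def using g \<sigma> by blast
  then show ?thesis
    by blast
qed

end
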